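(* Let $\alpha$ be an $H$-coloring of $G$ and let $C$ be an $\alpha$-tight closed walk in $G$. Then every vertex of $C$ is frozen in $\alpha$.
   Context: All graphs are finite and undirected. $G$ is a connected loopless graph with at least one edge. $H$ is a connected graph with at least one edge, possibly with loops, having the monochromatic neighborhood property: for all $a,b\in V(H)$, $|N_H(a)\cap N_H(b)|\le 1$, where $N_H(a)=\{w: aw\in E(H)\}$. An $H$-coloring of $G$ is a map $\sigma:V(G)\to V(H)$ such that $uv\in E(G)$ implies $\sigma(u)\sigma(v)\in E(H)$. An $H$-recoloring sequence is a sequence $\sigma_0,\dots,\sigma_l$ of $H$-colorings of $G$ in which consecutive colorings differ in the color of exactly one vertex. An oriented edge is an ordered pair $(x,y)$ with $xy$ an edge; $(x,y)^{-1}=(y,x)$. A walk is a sequence of oriented edges in which each starts where the previous ends; it is closed if it ends where it starts. A walk is reduced if no two consecutive edges $e_ie_{i+1}$ satisfy $e_{i+1}=e_i^{-1}$. A nonempty closed walk $e_1\dots e_k$ is cyclically reduced if it is reduced and $e_k\neq e_1^{-1}$. For a walk $W=(x_0,x_1)\dots(x_{k-1},x_k)$ in $G$, $\alpha(W)=(\alpha(x_0),\alpha(x_1))\dots(\alpha(x_{k-1}),\alpha(x_k))$. A closed walk $C$ in $G$ is $\alpha$-tight if $\alpha(C)$ is cyclically reduced. A vertex $v$ is frozen in $\alpha$ if every $H$-recoloring sequence starting at $\alpha$ ends in a coloring $\beta$ with $\beta(v)=\alpha(v)$. *)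

theory Defs
  imports Main
begin

text \<open>A graph is a vertex set V together with a set E of oriented edges (ordered pairs);
  undirectedness is symmetry of E. Loops are pairs (x,x).\<close>

definition graph :: "'a set \<Rightarrow> ('a \<times> 'a) set \<Rightarrow> bool" where
  "graph V E \<longleftrightarrow> finite V \<and> E \<subseteq> V \<times> V \<and> sym E"

definition loopless :: "('a \<times> 'a) set \<Rightarrow> bool" where
  "loopless E \<longleftrightarrow> (\<forall>x. (x, x) \<notin> E)"

definition connected_graph :: "'a set \<Rightarrow> ('a \<times> 'a) set \<Rightarrow> bool" where
  "connected_graph V E \<longleftrightarrow> (\<forall>u\<in>V. \<forall>v\<in>V. (u, v) \<in> E\<^sup>*)"

definition nbhd :: "('a \<times> 'a) set \<Rightarrow> 'a \<Rightarrow> 'a set" where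
  "nbhd E a = {w. (a, w) \<in> E}"

definition mono_nbhd_prop :: "'a set \<Rightarrow> ('a \<times> 'a) set \<Rightarrow> bool" where
  "mono_nbhd_prop V E \<longleftrightarrow> (\<forall>a\<in>V. \<forall>b\<in>V. a \<noteq> b \<longrightarrow> card (nbhd E a \<inter> nbhd E b) \<le> 1)"

definition hom_coloring ::
  "'a set \<Rightarrow> ('a \<times> 'a) set \<Rightarrow> 'b set \<Rightarrow> ('b \<times> 'b) set \<Rightarrow> ('a \<Rightarrow> 'b) \<Rightarrow> bool" where
  "hom_coloring VG EG VH EH \<sigma> \<longleftrightarrow>
     (\<forall>v\<in>VG. \<sigma> v \<in> VH) \<and> (\<forall>u v. (u, v) \<in> EG \<longrightarrow> (\<sigma> u, \<sigma> v) \<in> EH)"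

definition differ_in_one :: "'a set \<Rightarrow> ('a \<Rightarrow> 'b) \<Rightarrow> ('a \<Rightarrow> 'b) \<Rightarrow> bool" where
  "differ_in_one VG \<sigma> \<tau> \<longleftrightarrow> card {v\<in>VG. \<sigma> v \<noteq> \<tau> v} = 1"

definition recoloring_seq ::
  "'a set \<Rightarrow> ('a \<times> 'a) set \<Rightarrow> 'b set \<Rightarrow> ('b \<times> 'b) set \<Rightarrow> ('a \<Rightarrow> 'b) list \<Rightarrow> bool" where
  "recoloring_seq VG EG VH EH ss \<longleftrightarrow> ss \<noteq> [] \<and>
     (\<forall>\<sigma>\<in>set ss. hom_coloring VG EG VH EH \<sigma>) \<and>
     (\<forall>i. Suc i < length ss \<longrightarrow> differ_in_one VG (ss ! i) (ss ! Suc i))"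

definition frozen ::
  "'a set \<Rightarrow> ('a \<times> 'a) set \<Rightarrow> 'b set \<Rightarrow> ('b \<times> 'b) set \<Rightarrow> ('a \<Rightarrow> 'b) \<Rightarrow> 'a \<Rightarrow> bool" where
  "frozen VG EG VH EH \<alpha> v \<longleftrightarrow>
     (\<forall>ss. recoloring_seq VG EG VH EH ss \<and> hd ss = \<alpha> \<longrightarrow> last ss v = \<alpha> v)"

definition inv_edge :: "'a \<times> 'a \<Rightarrow> 'a \<times> 'a" where
  "inv_edge e = (snd e, fst e)"

definition is_walk :: "('a \<times> 'a) set \<Rightarrow> ('a \<times> 'a) list \<Rightarrow> bool" where
  "is_walk E W \<longleftrightarrow> set W \<subseteq> E \<and> (\<forall>i. Suc i < length W \<longrightarrow> snd (W ! i) = fst (W ! Suc i))"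

definition closed_walk :: "('a \<times> 'a) set \<Rightarrow> ('a \<times> 'a) list \<Rightarrow> bool" where
  "closed_walk E W \<longleftrightarrow> is_walk E W \<and> (W \<noteq> [] \<longrightarrow> fst (hd W) = snd (last W))"

definition reduced :: "('a \<times> 'a) list \<Rightarrow> bool" where
  "reduced W \<longleftrightarrow> (\<forall>i. Suc i < length W \<longrightarrow> W ! Suc i \<noteq> inv_edge (W ! i))"

definition cyclically_reduced :: "('a \<times> 'a) set \<Rightarrow> ('a \<times> 'a) list \<Rightarrow> bool" where
  "cyclically_reduced E W \<longleftrightarrow> W \<noteq> [] \<and> closed_walk E W \<and> reduced W \<and> last W \<noteq> inv_edge (hd W)"

definition map_walk :: "('a \<Rightarrow> 'b) \<Rightarrow> ('a \<times> 'a) list \<Rightarrow> ('b \<times> 'b) list" where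
  "map_walk \<alpha> W = map (\<lambda>(x, y). (\<alpha> x, \<alpha> y)) W"

definition tight :: "('a \<times> 'a) set \<Rightarrow> ('b \<times> 'b) set \<Rightarrow> ('a \<Rightarrow> 'b) \<Rightarrow> ('a \<times> 'a) list \<Rightarrow> bool" where
  "tight EG EH \<alpha> C \<longleftrightarrow> closed_walk EG C \<and> cyclically_reduced EH (map_walk \<alpha> C)"

definition walk_vertices :: "('a \<times> 'a) list \<Rightarrow> 'a set" where
  "walk_vertices W = fst ` set W \<union> snd ` set W"

end

theory Submission
  imports Defs
begin

text \<open>
  Let C be an \<alpha>-tight closed walk and let one recoloring step change only the
  colour of a vertex v of C.  The walk enters v along an edge (u,v) and leaves it along the
  cyclically next edge (v,w); since \<alpha>(C) is cyclically reduced, \<alpha> u \<noteq> \<alpha> w.  Both the old and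
  the new colour of v are common neighbours of \<alpha> u and \<alpha> w in H (u and w keep their colours,
  as G is loopless), so by the monochromatic neighbourhood property they coincide.  Hence a
  single step never changes a colour on C, the image of C stays cyclically reduced, and by
  induction along any recoloring sequence the colours on C never change.
\<close>

lemma closed_walk_cyclic_succ:
  assumes "closed_walk E C" and "i < length C"
  shows "snd (C ! i) = fst (C ! (Suc i mod length C))"
proof (cases "Suc i < length C")
  case True
  then show ?thesis using assms by (simp add: closed_walk_def is_walk_def)
next
  case False
  then have "Suc i = length C" using assms(2) by simp
  then have "i = length C - 1" "Suc i mod length C = 0" by auto
  then show ?thesis using assms
    by (auto simp: closed_walk_def hd_conv_nth last_conv_nth)
qed

lemma closed_walk_vertex_passage:
  assumes "closed_walk E C" and "v \<in> walk_vertices C"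
  obtains i where "i < length C" "snd (C ! i) = v" "fst (C ! (Suc i mod length C)) = v"
proof -
  have ne: "C \<noteq> []" using assms(2) by (auto simp: walk_vertices_def)
  from assms(2) consider (enter) i where "i < length C" "snd (C ! i) = v"
    | (leave) k where "k < length C" "fst (C ! k) = v"
    by (auto simp: walk_vertices_def in_set_conv_nth)
  then show ?thesis
  proof cases
    case enter
    then show ?thesis using that closed_walk_cyclic_succ[OF assms(1)] by metis
  next
    case leave
    define i where "i = (k + length C - 1) mod length C"
    have i: "i < length C" using ne by (simp add: i_def)
    have "Suc i mod length C = k"
      using leave(1) ne unfolding i_def by (simp add: mod_Suc_eq)
    then show ?thesis using that i leave(2) closed_walk_cyclic_succ[OF assms(1) i] by metis
  qed
qed

lemma cyclically_reduced_no_backtrack: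
  assumes "cyclically_reduced E W" and "i < length W"
  shows "W ! (Suc i mod length W) \<noteq> inv_edge (W ! i)"
proof (cases "Suc i < length W")
  case True
  then show ?thesis using assms by (simp add: cyclically_reduced_def reduced_def)
next
  case False
  then have "Suc i = length W" using assms(2) by simp
  then have "i = length W - 1" "Suc i mod length W = 0" by auto
  then show ?thesis using assms
    by (auto simp: cyclically_reduced_def hd_conv_nth last_conv_nth inv_edge_def)
qed

lemma map_walk_cong:
  assumes "\<And>x. x \<in> walk_vertices C \<Longrightarrow> \<sigma> x = \<tau> x"
  shows "map_walk \<sigma> C = map_walk \<tau> C"
  using assms by (auto simp: map_walk_def walk_vertices_def case_prod_beta intro!: map_cong)

lemma mono_nbhd_common_neighbour_unique:
  assumes "graph V E" and "mono_nbhd_prop V E"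
    and "a \<in> V" "b \<in> V" "a \<noteq> b"
    and "x \<in> nbhd E a \<inter> nbhd E b" "y \<in> nbhd E a \<inter> nbhd E b"
  shows "x = y"
proof -
  have "finite (nbhd E a \<inter> nbhd E b)"
    using assms(1) by (auto simp: graph_def nbhd_def intro: finite_subset)
  moreover have "card (nbhd E a \<inter> nbhd E b) \<le> 1"
    using assms(2-5) by (auto simp: mono_nbhd_prop_def)
  ultimately show ?thesis using assms(6,7) by (auto dest: card_le_Suc0_iff_eq[THEN iffD1])
qed

lemma differ_in_one_agree_elsewhere:
  assumes "differ_in_one V \<sigma> \<tau>" and "v \<in> V" "\<sigma> v \<noteq> \<tau> v" and "x \<in> V" "x \<noteq> v"
  shows "\<sigma> x = \<tau> x"
proof -
  obtain z where "{y\<in>V. \<sigma> y \<noteq> \<tau> y} = {z}"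
    using assms(1) card_1_singletonE unfolding differ_in_one_def by blast
  then have "v = z" using assms(2,3) by blast
  then have "x \<noteq> z" using assms(5) by simp
  with \<open>{y\<in>V. \<sigma> y \<noteq> \<tau> y} = {z}\<close> show ?thesis using assms(4) by blast
qed

lemma recolor_step_fixes_tight_walk:
  assumes gG: "graph VG EG" and ll: "loopless EG"
    and gH: "graph VH EH" and mn: "mono_nbhd_prop VH EH"
    and \<sigma>: "hom_coloring VG EG VH EH \<sigma>" and \<tau>: "hom_coloring VG EG VH EH \<tau>"
    and d: "differ_in_one VG \<sigma> \<tau>"
    and tight: "tight EG EH \<sigma> C" and v: "v \<in> walk_vertices C"
  shows "\<tau> v = \<sigma> v"
proof (rule ccontr)
  assume changed: "\<tau> v \<noteq> \<sigma> v"
  have cw: "closed_walk EG C" and cr: "cyclically_reduced EH (map_walk \<sigma> C)"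
    using tight by (auto simp: tight_def)
  obtain i where i: "i < length C" "snd (C ! i) = v" "fst (C ! (Suc i mod length C)) = v"
    using closed_walk_vertex_passage[OF cw v] by blast
  define j where "j = Suc i mod length C"
  have j: "j < length C" using i(1) unfolding j_def by (intro mod_less_divisor) auto
  define u where "u = fst (C ! i)"
  define w where "w = snd (C ! j)"
  have "C ! i \<in> EG" "C ! j \<in> EG" using cw i(1) j by (auto simp: closed_walk_def is_walk_def)
  then have uv: "(u, v) \<in> EG" and vw: "(v, w) \<in> EG"
    using i(2,3) unfolding u_def w_def j_def by (metis prod.collapse)+
  then have wv: "(w, v) \<in> EG" using gG by (auto simp: graph_def dest: symD)
  have uVG: "u \<in> VG" and vVG: "v \<in> VG" and wVG: "w \<in> VG"
    using uv vw gG by (auto simp: graph_def)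
  have "u \<noteq> v" "w \<noteq> v" using uv vw ll by (auto simp: loopless_def)
  then have same_uw: "\<tau> u = \<sigma> u" "\<tau> w = \<sigma> w"
    using differ_in_one_agree_elsewhere[OF d vVG] changed uVG wVG by metis+
  text \<open>Tightness: the colours of the two walk-neighbours of v differ.\<close>
  have "map_walk \<sigma> C ! j \<noteq> inv_edge (map_walk \<sigma> C ! i)"
    using cyclically_reduced_no_backtrack[OF cr] i(1) by (simp add: map_walk_def j_def)
  then have "\<sigma> u \<noteq> \<sigma> w"
    using i j by (auto simp: map_walk_def case_prod_beta inv_edge_def u_def w_def j_def)
  moreover have "\<sigma> v \<in> nbhd EH (\<sigma> u) \<inter> nbhd EH (\<sigma> w)"
    using \<sigma> uv wv by (auto simp: hom_coloring_def nbhd_def)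
  moreover have "\<tau> v \<in> nbhd EH (\<sigma> u) \<inter> nbhd EH (\<sigma> w)"
    using \<tau> uv wv by (auto simp: hom_coloring_def nbhd_def same_uw[symmetric])
  moreover have "\<sigma> u \<in> VH" "\<sigma> w \<in> VH" using \<sigma> uVG wVG by (auto simp: hom_coloring_def)
  ultimately show False
    using mono_nbhd_common_neighbour_unique[OF gH mn] changed by metis
qed

text \<open>Along a recoloring sequence starting at \<alpha>, every colouring agrees with \<alpha> on a tight walk;
  tightness is preserved because the image of the walk does not change.\<close>
lemma recoloring_seq_fixes_tight_walk:
  assumes "graph VG EG" "loopless EG" "graph VH EH" "mono_nbhd_prop VH EH"
    and seq: "recoloring_seq VG EG VH EH ss" and start: "hd ss = \<alpha>"
    and tight: "tight EG EH \<alpha> C"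
    and "k < length ss" and "x \<in> walk_vertices C"
  shows "(ss ! k) x = \<alpha> x"
  using assms(8,9)
proof (induction k arbitrary: x)
  case 0
  then show ?case using seq start by (simp add: recoloring_seq_def hd_conv_nth)
next
  case (Suc k)
  have IH: "\<And>y. y \<in> walk_vertices C \<Longrightarrow> (ss ! k) y = \<alpha> y" using Suc by simp
  have "tight EG EH (ss ! k) C"
    using tight map_walk_cong[of C "ss ! k" \<alpha>] IH by (simp add: tight_def)
  moreover have "hom_coloring VG EG VH EH (ss ! k)" "hom_coloring VG EG VH EH (ss ! Suc k)"
    and "differ_in_one VG (ss ! k) (ss ! Suc k)"
    using seq Suc.prems(1) by (auto simp: recoloring_seq_def)
  ultimately have "(ss ! Suc k) x = (ss ! k) x"
    using recolor_step_fixes_tight_walk[OF assms(1-4)] Suc.prems(2) by blast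
  then show ?case using IH Suc.prems(2) by simp
qed

theorem mainTheorem4:
  fixes VG :: "'a set" and EG :: "('a \<times> 'a) set"
    and VH :: "'b set" and EH :: "('b \<times> 'b) set"
    and \<alpha> :: "'a \<Rightarrow> 'b" and C :: "('a \<times> 'a) list"
  assumes "graph VG EG" and "loopless EG" and "connected_graph VG EG" and "EG \<noteq> {}"
    and "graph VH EH" and "connected_graph VH EH" and "EH \<noteq> {}"
    and "mono_nbhd_prop VH EH"
    and "hom_coloring VG EG VH EH \<alpha>"
    and "tight EG EH \<alpha> C"
  shows "\<forall>v\<in>walk_vertices C. frozen VG EG VH EH \<alpha> v"
proof (intro ballI, unfold frozen_def, intro allI impI)
  fix v ss
  assume v: "v \<in> walk_vertices C" and ss: "recoloring_seq VG EG VH EH ss \<and> hd ss = \<alpha>"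
  then have "ss \<noteq> []" by (simp add: recoloring_seq_def)
  then have "last ss = ss ! (length ss - 1)" "length ss - 1 < length ss"
    by (simp_all add: last_conv_nth)
  then show "last ss v = \<alpha> v"
    using recoloring_seq_fixes_tight_walk[OF assms(1,2,5,8)] ss assms(10) v by metis
qed

end
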